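(* For every integer $\ell\geq 1$ there is a first-order prenex sentence $\sigma_\ell$ over $\tau_{\mathsf{ord}}$ with exactly $q^*(\ell)$ quantifiers that separates $L_{\leq\ell}$ from $L_{>\ell}$, and whose quantifier prefix strictly alternates between $\exists$ and $\forall$ and ends with $\forall$.
   Context: Vocabulary $\tau_{\mathsf{ord}} = \langle < ;\ \mathsf{min}, \mathsf{max}\rangle$ with $<$ binary and $\mathsf{min},\mathsf{max}$ constants. For $\ell \geq 1$, $L_\ell$ is the linear order with $\ell+1$ elements (its length is $\ell$), with $\mathsf{min},\mathsf{max}$ interpreted as first and last elements. $L_{\leq \ell}=\{L_1,\dots,L_\ell\}$, $L_{>\ell}=\{L_m: m>\ell\}$. A sentence separates $\mathcal{A}$ from $\mathcal{B}$ if it is true in all structures of $\mathcal{A}$ and false in all of $\mathcal{B}$. Define $q^*_\forall, q^*_\exists : \mathbb{Z}_{\geq 1}\to\mathbb{N}$ by $q^*_\forall(1)=1$, $q^*_\exists(1)=2$, $q^*_\forall(2)=2$, and $q^*_\exists(2\ell) = q^*_\forall(\ell)+1$ ($\ell\geq 1$); $q^*_\exists(2\ell+1) = q^*_\forall(\ell+1)+1$ ($\ell \geq 1$); $q^*_\forall(2\ell) = q^*_\exists(\ell)+1$ ($\ell\geq 2$); $q^*_\forall(2\ell+1) = q^*_\exists(\ell)+1$ ($\ell\geq 1$). Let $q^*(\ell) = \min(q^*_\exists(\ell), q^*_\forall(\ell))$. *)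

theory Defs
  imports Main
begin

text \<open>Terms: variables (indexed by position of the binding quantifier in the prefix),
  and the constants min and max.\<close>
datatype trm = Var nat | Min | Max

datatype qf = Less trm trm | Eq trm trm | TT | FF
  | Neg qf | Conj qf qf | Disj qf qf

datatype quant = Ex | All

text \<open>A prenex formula: a quantifier prefix and a quantifier-free matrix.
  The i-th quantifier of the prefix (counting from 0) binds the variable Var i.\<close>
type_synonym prenex = "quant list \<times> qf"

fun trm_vars :: "trm \<Rightarrow> nat set" where
  "trm_vars (Var i) = {i}"
| "trm_vars Min = {}"
| "trm_vars Max = {}"

fun qf_vars :: "qf \<Rightarrow> nat set" where
  "qf_vars (Less s t) = trm_vars s \<union> trm_vars t"
| "qf_vars (Eq s t) = trm_vars s \<union> trm_vars t"
| "qf_vars TT = {}"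
| "qf_vars FF = {}"
| "qf_vars (Neg f) = qf_vars f"
| "qf_vars (Conj f g) = qf_vars f \<union> qf_vars g"
| "qf_vars (Disj f g) = qf_vars f \<union> qf_vars g"

definition is_sentence :: "prenex \<Rightarrow> bool" where
  "is_sentence \<sigma> \<longleftrightarrow> (\<forall>i\<in>qf_vars (snd \<sigma>). i < length (fst \<sigma>))"

text \<open>Semantics in the linear order L_m, with universe {0..m}, min = 0, max = m,
  and < the usual order. An assignment is the list of values chosen so far.\<close>
fun trm_eval :: "nat \<Rightarrow> nat list \<Rightarrow> trm \<Rightarrow> nat" where
  "trm_eval m xs (Var i) = xs ! i"
| "trm_eval m xs Min = 0"
| "trm_eval m xs Max = m"

fun qf_eval :: "nat \<Rightarrow> nat list \<Rightarrow> qf \<Rightarrow> bool" where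
  "qf_eval m xs (Less s t) = (trm_eval m xs s < trm_eval m xs t)"
| "qf_eval m xs (Eq s t) = (trm_eval m xs s = trm_eval m xs t)"
| "qf_eval m xs TT = True"
| "qf_eval m xs FF = False"
| "qf_eval m xs (Neg f) = (\<not> qf_eval m xs f)"
| "qf_eval m xs (Conj f g) = (qf_eval m xs f \<and> qf_eval m xs g)"
| "qf_eval m xs (Disj f g) = (qf_eval m xs f \<or> qf_eval m xs g)"

fun prefix_eval :: "nat \<Rightarrow> quant list \<Rightarrow> qf \<Rightarrow> nat list \<Rightarrow> bool" where
  "prefix_eval m [] \<phi> xs = qf_eval m xs \<phi>"
| "prefix_eval m (Ex # qs) \<phi> xs = (\<exists>a\<le>m. prefix_eval m qs \<phi> (xs @ [a]))"
| "prefix_eval m (All # qs) \<phi> xs = (\<forall>a\<le>m. prefix_eval m qs \<phi> (xs @ [a]))"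

text \<open>L_m satisfies the prenex sentence sigma (L_m has m+1 elements, length m).\<close>
definition holds_in_L :: "nat \<Rightarrow> prenex \<Rightarrow> bool" where
  "holds_in_L m \<sigma> = prefix_eval m (fst \<sigma>) (snd \<sigma>) []"

definition separates_L :: "nat \<Rightarrow> prenex \<Rightarrow> bool" where
  "separates_L l \<sigma> \<longleftrightarrow>
     (\<forall>m. 1 \<le> m \<and> m \<le> l \<longrightarrow> holds_in_L m \<sigma>) \<and>
     (\<forall>m. l < m \<longrightarrow> \<not> holds_in_L m \<sigma>)"

definition alternating_ending_All :: "quant list \<Rightarrow> bool" where
  "alternating_ending_All qs \<longleftrightarrow> qs \<noteq> [] \<and> last qs = All \<and>
     (\<forall>i. Suc i < length qs \<longrightarrow> qs ! i \<noteq> qs ! Suc i)"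

text \<open>Defined on integers >= 1 as in the paper; the value at 0 is irrelevant.\<close>
function qA :: "nat \<Rightarrow> nat" and qE :: "nat \<Rightarrow> nat" where
  "qA n = (if n \<le> 1 then 1 else if n = 2 then 2 else qE (n div 2) + 1)"
| "qE n = (if n \<le> 1 then 2 else if even n then qA (n div 2) + 1
           else qA (n div 2 + 1) + 1)"
  by pat_completeness auto
termination
  by (relation "measure (case_sum id id)") (auto, presburger)

definition qstar :: "nat \<Rightarrow> nat" where
  "qstar l = min (qE l) (qA l)"

end

theory Submission
  imports Defs
begin

text \<open>
  The sentence says \<open>max - min \<le> \<ell>\<close>. Under the alternating prefix of length \<open>q\<close>
  (ending with \<open>\<forall>\<close>) we express \<open>t - s \<le> L\<close> recursively: a universal step demands
  that every \<open>z\<close> strictly between \<open>s\<close> and \<open>t\<close> lies within \<open>\<lfloor>L/2\<rfloor>\<close> of \<open>s\<close>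
  or within \<open>\<lfloor>(L-1)/2\<rfloor>\<close> of \<open>t\<close>; an existential step asks for some \<open>w \<in> (s, t]\<close>
  within \<open>\<lceil>L/2\<rceil>\<close> of \<open>s\<close> and \<open>\<lfloor>L/2\<rfloor>\<close> of \<open>t\<close>. Both halves reuse the same
  remaining quantifiers: once the next variable is chosen, the guard of one half already
  fails, so that half is decided by the variables chosen so far, and the connective
  \<open>\<or>\<close> resp. \<open>\<and>\<close> commutes with the rest of the prefix. Hence \<open>q\<close> quantifiers handle
  every \<open>L \<le> c(q)\<close>, where \<open>c(q+1)\<close> is \<open>2c(q)+1\<close> after a universal and \<open>2c(q)\<close>
  after an existential step, and the recursion defining \<open>q*\<close> gives \<open>\<ell> \<le> c(q*(\<ell>))\<close>.
\<close>

fun alternating_prefix :: "nat \<Rightarrow> quant list" where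
  "alternating_prefix 0 = []"
| "alternating_prefix (Suc q) = (if even q then All else Ex) # alternating_prefix q"

fun dist_le_formula :: "nat \<Rightarrow> nat \<Rightarrow> nat \<Rightarrow> trm \<Rightarrow> trm \<Rightarrow> qf" where
  "dist_le_formula 0 L d s t = Eq s t"
| "dist_le_formula (Suc q) L d s t = (if L = 0 then Eq s t else if even q then
     Disj (Neg (Conj (Less s (Var d)) (Less (Var d) t)))
       (Disj (dist_le_formula q (L div 2) (Suc d) s (Var d))
             (dist_le_formula q ((L - 1) div 2) (Suc d) (Var d) t))
   else Conj (Conj (Less s (Var d)) (Neg (Less t (Var d))))
       (Conj (dist_le_formula q ((L + 1) div 2) (Suc d) s (Var d))
             (dist_le_formula q (L div 2) (Suc d) (Var d) t)))"

fun dist_capacity :: "nat \<Rightarrow> nat" where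
  "dist_capacity 0 = 0"
| "dist_capacity (Suc q) = (if even q then 2 * dist_capacity q + 1 else 2 * dist_capacity q)"

lemma trm_eval_append:
  "trm_vars s \<subseteq> {..<length xs} \<Longrightarrow> trm_eval m (xs @ ys) s = trm_eval m xs s"
  by (cases s) (auto simp: nth_append)

lemma qf_eval_append:
  "qf_vars \<phi> \<subseteq> {..<length xs} \<Longrightarrow> qf_eval m (xs @ ys) \<phi> = qf_eval m xs \<phi>"
  by (induction \<phi>) (auto simp: trm_eval_append)

definition determined :: "nat \<Rightarrow> nat list \<Rightarrow> qf \<Rightarrow> bool \<Rightarrow> bool" where
  "determined m ys \<phi> c \<longleftrightarrow> (\<forall>zs. qf_eval m (ys @ zs) \<phi> = c)"

lemma determined_by_vars:
  "qf_vars \<phi> \<subseteq> {..<length ys} \<Longrightarrow> determined m ys \<phi> (qf_eval m ys \<phi>)"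
  unfolding determined_def by (simp add: qf_eval_append)

lemma determined_append: "determined m ys \<phi> c \<Longrightarrow> determined m (ys @ zs) \<phi> c"
  unfolding determined_def by simp

lemma prefix_eval_determined: "determined m ys \<phi> c \<Longrightarrow> prefix_eval m qs \<phi> ys = c"
proof (induction qs arbitrary: ys)
  case Nil
  then show ?case unfolding determined_def by (metis append_Nil2 prefix_eval.simps(1))
next
  case (Cons q qs)
  then have "prefix_eval m qs \<phi> (ys @ [a]) = c" for a by (simp add: determined_append)
  then show ?case by (cases q) auto
qed

lemma prefix_eval_cong:
  assumes "\<And>zs. qf_eval m (ys @ zs) \<phi> = qf_eval m (ys @ zs) \<psi>"
  shows "prefix_eval m qs \<phi> ys = prefix_eval m qs \<psi> ys"
  using assms
proof (induction qs arbitrary: ys)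
  case Nil
  then show ?case by (metis append_Nil2 prefix_eval.simps(1))
next
  case (Cons q qs)
  then have "prefix_eval m qs \<phi> (ys @ [a]) = prefix_eval m qs \<psi> (ys @ [a])" for a by simp
  then show ?case by (cases q) auto
qed

lemma prefix_eval_Disj_determined:
  assumes "determined m ys A c \<or> determined m ys B c"
  shows "prefix_eval m qs (Disj A B) ys \<longleftrightarrow> prefix_eval m qs A ys \<or> prefix_eval m qs B ys"
proof (cases c)
  case True
  then have "determined m ys (Disj A B) True" using assms by (auto simp: determined_def)
  then show ?thesis using assms True prefix_eval_determined by metis
next
  case False
  show ?thesis
  proof (cases "determined m ys A c")
    case True
    then have "prefix_eval m qs (Disj A B) ys = prefix_eval m qs B ys"
      using False by (intro prefix_eval_cong) (simp add: determined_def)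
    then show ?thesis using True False prefix_eval_determined by metis
  next
    case A_undetermined: False
    then have "determined m ys B c" using assms by blast
    then have "prefix_eval m qs (Disj A B) ys = prefix_eval m qs A ys"
      using False by (intro prefix_eval_cong) (simp add: determined_def)
    then show ?thesis using \<open>determined m ys B c\<close> False prefix_eval_determined by metis
  qed
qed

lemma prefix_eval_Conj_determined:
  assumes "determined m ys A c \<or> determined m ys B c"
  shows "prefix_eval m qs (Conj A B) ys \<longleftrightarrow> prefix_eval m qs A ys \<and> prefix_eval m qs B ys"
proof (cases c)
  case False
  then have "determined m ys (Conj A B) False" using assms by (auto simp: determined_def)
  then show ?thesis using assms False prefix_eval_determined by metis
next
  case True
  show ?thesis
  proof (cases "determined m ys A c")
    case A_determined: True
    then have "prefix_eval m qs (Conj A B) ys = prefix_eval m qs B ys"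
      using True by (intro prefix_eval_cong) (simp add: determined_def)
    then show ?thesis using A_determined True prefix_eval_determined by metis
  next
    case A_undetermined: False
    then have "determined m ys B c" using assms by blast
    then have "prefix_eval m qs (Conj A B) ys = prefix_eval m qs A ys"
      using True by (intro prefix_eval_cong) (simp add: determined_def)
    then show ?thesis using \<open>determined m ys B c\<close> True prefix_eval_determined by metis
  qed
qed

lemma qf_vars_dist_le_formula:
  "qf_vars (dist_le_formula q L d s t) \<subseteq> trm_vars s \<union> trm_vars t \<union> {d..<d + q}"
proof (induction q arbitrary: L d s t)
  case 0
  then show ?case by simp
next
  case (Suc q)
  have "qf_vars (dist_le_formula q L' (Suc d) s' t') \<subseteq> trm_vars s \<union> trm_vars t \<union> {d..<d + Suc q}"
    if "s' \<in> {s, Var d}" "t' \<in> {t, Var d}" for L' s' t'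
    using Suc.IH[of L' "Suc d" s' t'] that by auto
  then show ?case by (auto simp del: dist_le_formula.simps(1) simp: Ball_def)
qed

lemma dist_le_formula_trivial: "q = 0 \<or> L = 0 \<Longrightarrow> dist_le_formula q L d s t = Eq s t"
  by (cases q) auto

lemma dist_le_formula_determined_outside_guard:
  assumes "length ys = Suc d" "trm_vars s \<subseteq> {..<d}" "trm_vars t \<subseteq> {..<d}" "L \<noteq> 0"
    and "\<not> (trm_eval m ys s < ys ! d \<and> ys ! d \<le> trm_eval m ys t \<and>
             (even q \<longrightarrow> ys ! d < trm_eval m ys t))"
  shows "determined m ys (dist_le_formula (Suc q) L d s t) (even q)"
  unfolding determined_def
proof
  fix zs
  have "trm_eval m (ys @ zs) s = trm_eval m ys s" "trm_eval m (ys @ zs) t = trm_eval m ys t"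
    using assms(1-3) by (auto simp: subset_iff intro!: trm_eval_append)
  moreover have "(ys @ zs) ! d = ys ! d" using assms(1) by (simp add: nth_append)
  ultimately show "qf_eval m (ys @ zs) (dist_le_formula (Suc q) L d s t) = even q"
    using assms(4,5) by auto
qed

lemma dist_le_formula_halves_determined:
  assumes "length ys = Suc d" "trm_vars s \<subseteq> {..<d}" "trm_vars t \<subseteq> {..<d}"
  shows "(\<exists>c. determined m (ys @ [w]) (dist_le_formula q a (Suc d) s (Var d)) c) \<or>
         (\<exists>c. determined m (ys @ [w]) (dist_le_formula q b (Suc d) (Var d) t) c)"
proof (cases "q = 0 \<or> a = 0 \<or> b = 0")
  case True
  then have "dist_le_formula q a (Suc d) s (Var d) = Eq s (Var d) \<or>
             dist_le_formula q b (Suc d) (Var d) t = Eq (Var d) t"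
    using dist_le_formula_trivial by blast
  moreover have "qf_vars (Eq s (Var d)) \<subseteq> {..<length (ys @ [w])}"
    "qf_vars (Eq (Var d) t) \<subseteq> {..<length (ys @ [w])}"
    using assms by (auto simp: subset_iff)
  ultimately show ?thesis using determined_by_vars by metis
next
  case False
  then obtain q' where q: "q = Suc q'" by (cases q) auto
  let ?ys = "ys @ [w]"
  have len: "length ?ys = Suc (Suc d)" using assms(1) by simp
  have vars: "trm_vars s \<subseteq> {..<Suc d}" "trm_vars t \<subseteq> {..<Suc d}" "trm_vars (Var d) \<subseteq> {..<Suc d}"
    using assms(2,3) by auto
  have ev: "trm_eval m ?ys (Var d) = ys ! d" "?ys ! Suc d = w"
    using assms(1) by (auto simp: nth_append)
  show ?thesis
  proof (cases "w \<le> ys ! d")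
    case True
    then have "determined m ?ys (dist_le_formula q b (Suc d) (Var d) t) (even q')"
      unfolding q using False ev by (intro dist_le_formula_determined_outside_guard[OF len vars(3,2)]) auto
    then show ?thesis by blast
  next
    case w_right: False
    then have "determined m ?ys (dist_le_formula q a (Suc d) s (Var d)) (even q')"
      unfolding q using False ev by (intro dist_le_formula_determined_outside_guard[OF len vars(1,3)]) auto
    then show ?thesis by blast
  qed
qed

lemma prefix_eval_Disj_halves:
  fixes a b :: nat
  assumes "even q" "length ys = Suc d" "trm_vars s \<subseteq> {..<d}" "trm_vars t \<subseteq> {..<d}"
  defines "A \<equiv> dist_le_formula q a (Suc d) s (Var d)"
    and "B \<equiv> dist_le_formula q b (Suc d) (Var d) t"
  shows "prefix_eval m (alternating_prefix q) (Disj A B) ys \<longleftrightarrow>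
         prefix_eval m (alternating_prefix q) A ys \<or> prefix_eval m (alternating_prefix q) B ys"
proof (cases q)
  case 0
  then show ?thesis by simp
next
  case (Suc q')
  have "prefix_eval m (alternating_prefix q') (Disj A B) (ys @ [w]) \<longleftrightarrow>
        prefix_eval m (alternating_prefix q') A (ys @ [w]) \<or>
        prefix_eval m (alternating_prefix q') B (ys @ [w])" for w
    using dist_le_formula_halves_determined[OF assms(2-4)] unfolding A_def B_def
    by (metis prefix_eval_Disj_determined)
  then show ?thesis using Suc assms(1) by auto
qed

lemma prefix_eval_Conj_halves:
  fixes a b :: nat
  assumes "odd q" "length ys = Suc d" "trm_vars s \<subseteq> {..<d}" "trm_vars t \<subseteq> {..<d}"
  defines "A \<equiv> dist_le_formula q a (Suc d) s (Var d)"
    and "B \<equiv> dist_le_formula q b (Suc d) (Var d) t"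
  shows "prefix_eval m (alternating_prefix q) (Conj A B) ys \<longleftrightarrow>
         prefix_eval m (alternating_prefix q) A ys \<and> prefix_eval m (alternating_prefix q) B ys"
proof -
  obtain q' where q: "q = Suc q'" "even q'" using assms(1) by (cases q) auto
  have "prefix_eval m (alternating_prefix q') (Conj A B) (ys @ [w]) \<longleftrightarrow>
        prefix_eval m (alternating_prefix q') A (ys @ [w]) \<and>
        prefix_eval m (alternating_prefix q') B (ys @ [w])" for w
    using dist_le_formula_halves_determined[OF assms(2-4)] unfolding A_def B_def
    by (metis prefix_eval_Conj_determined)
  then show ?thesis using q by auto
qed

lemma prefix_eval_dist_le_formula_Suc_even_body:
  assumes "even q" "L \<noteq> 0" "length ys = Suc d" "trm_vars s \<subseteq> {..<d}" "trm_vars t \<subseteq> {..<d}"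
  shows "prefix_eval m (alternating_prefix q) (dist_le_formula (Suc q) L d s t) ys \<longleftrightarrow>
    (trm_eval m ys s < ys ! d \<and> ys ! d < trm_eval m ys t \<longrightarrow>
     prefix_eval m (alternating_prefix q) (dist_le_formula q (L div 2) (Suc d) s (Var d)) ys \<or>
     prefix_eval m (alternating_prefix q) (dist_le_formula q ((L - 1) div 2) (Suc d) (Var d) t) ys)"
proof (cases "trm_eval m ys s < ys ! d \<and> ys ! d < trm_eval m ys t")
  case False
  then have "determined m ys (dist_le_formula (Suc q) L d s t) (even q)"
    using assms(1) by (intro dist_le_formula_determined_outside_guard[OF assms(3-5,2)]) auto
  then show ?thesis using False assms(1) prefix_eval_determined by fastforce
next
  case True
  let ?G = "Conj (Less s (Var d)) (Less (Var d) t)"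
  have "qf_vars (Neg ?G) \<subseteq> {..<length ys}" using assms(3-5) by (auto simp: subset_iff)
  with True have "determined m ys (Neg ?G) False" using determined_by_vars[of "Neg ?G" ys m] by simp
  then have "prefix_eval m (alternating_prefix q) (dist_le_formula (Suc q) L d s t) ys \<longleftrightarrow>
      prefix_eval m (alternating_prefix q) (Disj (dist_le_formula q (L div 2) (Suc d) s (Var d))
        (dist_le_formula q ((L - 1) div 2) (Suc d) (Var d) t)) ys"
    using assms(1,2) prefix_eval_Disj_determined prefix_eval_determined by fastforce
  then show ?thesis using True prefix_eval_Disj_halves[OF assms(1,3-5)] by blast
qed

lemma prefix_eval_dist_le_formula_Suc_odd_body:
  assumes "odd q" "L \<noteq> 0" "length ys = Suc d" "trm_vars s \<subseteq> {..<d}" "trm_vars t \<subseteq> {..<d}"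
  shows "prefix_eval m (alternating_prefix q) (dist_le_formula (Suc q) L d s t) ys \<longleftrightarrow>
    trm_eval m ys s < ys ! d \<and> ys ! d \<le> trm_eval m ys t \<and>
    prefix_eval m (alternating_prefix q) (dist_le_formula q ((L + 1) div 2) (Suc d) s (Var d)) ys \<and>
    prefix_eval m (alternating_prefix q) (dist_le_formula q (L div 2) (Suc d) (Var d) t) ys"
proof (cases "trm_eval m ys s < ys ! d \<and> ys ! d \<le> trm_eval m ys t")
  case False
  then have "determined m ys (dist_le_formula (Suc q) L d s t) (even q)"
    using assms(1) by (intro dist_le_formula_determined_outside_guard[OF assms(3-5,2)]) auto
  then show ?thesis using False assms(1) prefix_eval_determined by fastforce
next
  case True
  let ?G = "Conj (Less s (Var d)) (Neg (Less t (Var d)))"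
  have "qf_vars ?G \<subseteq> {..<length ys}" using assms(3-5) by (auto simp: subset_iff)
  with True have "determined m ys ?G True" using determined_by_vars[of ?G ys m] by simp
  then have "prefix_eval m (alternating_prefix q) (dist_le_formula (Suc q) L d s t) ys \<longleftrightarrow>
      prefix_eval m (alternating_prefix q) (Conj (dist_le_formula q ((L + 1) div 2) (Suc d) s (Var d))
        (dist_le_formula q (L div 2) (Suc d) (Var d) t)) ys"
    using assms(1,2) prefix_eval_Conj_determined prefix_eval_determined by fastforce
  then show ?thesis using True prefix_eval_Conj_halves[OF assms(1,3-5)] by blast
qed

lemma all_between_near_an_end_iff:
  fixes u v m L :: nat
  assumes "L \<noteq> 0" "u \<le> v" "v \<le> m"
  shows "(\<forall>z\<le>m. u < z \<and> z < v \<longrightarrow> z - u \<le> L div 2 \<or> v - z \<le> (L - 1) div 2) \<longleftrightarrow> v - u \<le> L"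
proof
  assume near: "\<forall>z\<le>m. u < z \<and> z < v \<longrightarrow> z - u \<le> L div 2 \<or> v - z \<le> (L - 1) div 2"
  show "v - u \<le> L"
  proof (rule ccontr)
    assume "\<not> v - u \<le> L"
    then show False using near[rule_format, of "u + L div 2 + 1"] assms by linarith
  qed
qed (use assms in linarith)

lemma ex_between_near_both_ends_iff:
  fixes u v m L :: nat
  assumes "u < v" "v \<le> m"
  shows "(\<exists>w\<le>m. u < w \<and> w \<le> v \<and> w - u \<le> (L + 1) div 2 \<and> v - w \<le> L div 2) \<longleftrightarrow> v - u \<le> L"
proof (rule iffI[rotated])
  assume "v - u \<le> L"
  then show "\<exists>w\<le>m. u < w \<and> w \<le> v \<and> w - u \<le> (L + 1) div 2 \<and> v - w \<le> L div 2"
    using assms by (intro exI[of _ "min v (u + (L + 1) div 2)"]) linarith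
qed (elim exE conjE; linarith)

lemma trm_eval_snoc:
  "length xs = d \<Longrightarrow> trm_vars s \<subseteq> {..<d} \<Longrightarrow> trm_eval m (xs @ [z]) s = trm_eval m xs s"
  "length xs = d \<Longrightarrow> trm_eval m (xs @ [z]) (Var d) = z"
  by (auto intro: trm_eval_append)

lemma prefix_eval_dist_le_formula_Suc_even:
  assumes "even q" "L \<noteq> 0" "length xs = d" "trm_vars s \<subseteq> {..<d}" "trm_vars t \<subseteq> {..<d}"
    and "trm_eval m xs s = u" "trm_eval m xs t = v" "u \<le> v" "v \<le> m"
    and near_s: "\<And>z. u < z \<Longrightarrow> z < v \<Longrightarrow> prefix_eval m (alternating_prefix q)
      (dist_le_formula q (L div 2) (Suc d) s (Var d)) (xs @ [z]) \<longleftrightarrow> z - u \<le> L div 2"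
    and near_t: "\<And>z. u < z \<Longrightarrow> z < v \<Longrightarrow> prefix_eval m (alternating_prefix q)
      (dist_le_formula q ((L - 1) div 2) (Suc d) (Var d) t) (xs @ [z]) \<longleftrightarrow> v - z \<le> (L - 1) div 2"
  shows "prefix_eval m (alternating_prefix (Suc q)) (dist_le_formula (Suc q) L d s t) xs \<longleftrightarrow> v - u \<le> L"
proof -
  have "prefix_eval m (alternating_prefix q) (dist_le_formula (Suc q) L d s t) (xs @ [z]) \<longleftrightarrow>
      (u < z \<and> z < v \<longrightarrow> z - u \<le> L div 2 \<or> v - z \<le> (L - 1) div 2)" for z
    using prefix_eval_dist_le_formula_Suc_even_body[OF assms(1,2) _ assms(4,5), of "xs @ [z]"]
      near_s near_t assms(3-7) by (auto simp: trm_eval_snoc nth_append)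
  then have "prefix_eval m (alternating_prefix (Suc q)) (dist_le_formula (Suc q) L d s t) xs \<longleftrightarrow>
      (\<forall>z\<le>m. u < z \<and> z < v \<longrightarrow> z - u \<le> L div 2 \<or> v - z \<le> (L - 1) div 2)"
    using assms(1) by (simp del: dist_le_formula.simps)
  also have "\<dots> \<longleftrightarrow> v - u \<le> L" using all_between_near_an_end_iff assms(2,8,9) .
  finally show ?thesis .
qed

lemma prefix_eval_dist_le_formula_Suc_odd:
  assumes "odd q" "L \<noteq> 0" "length xs = d" "trm_vars s \<subseteq> {..<d}" "trm_vars t \<subseteq> {..<d}"
    and "trm_eval m xs s = u" "trm_eval m xs t = v" "u < v" "v \<le> m"
    and near_s: "\<And>w. u < w \<Longrightarrow> w \<le> v \<Longrightarrow> prefix_eval m (alternating_prefix q)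
      (dist_le_formula q ((L + 1) div 2) (Suc d) s (Var d)) (xs @ [w]) \<longleftrightarrow> w - u \<le> (L + 1) div 2"
    and near_t: "\<And>w. u < w \<Longrightarrow> w \<le> v \<Longrightarrow> prefix_eval m (alternating_prefix q)
      (dist_le_formula q (L div 2) (Suc d) (Var d) t) (xs @ [w]) \<longleftrightarrow> v - w \<le> L div 2"
  shows "prefix_eval m (alternating_prefix (Suc q)) (dist_le_formula (Suc q) L d s t) xs \<longleftrightarrow> v - u \<le> L"
proof -
  have "prefix_eval m (alternating_prefix q) (dist_le_formula (Suc q) L d s t) (xs @ [w]) \<longleftrightarrow>
      u < w \<and> w \<le> v \<and> w - u \<le> (L + 1) div 2 \<and> v - w \<le> L div 2" for w
    using prefix_eval_dist_le_formula_Suc_odd_body[OF assms(1,2) _ assms(4,5), of "xs @ [w]"]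
      near_s near_t assms(3-7) by (auto simp: trm_eval_snoc nth_append)
  then have "prefix_eval m (alternating_prefix (Suc q)) (dist_le_formula (Suc q) L d s t) xs \<longleftrightarrow>
      (\<exists>w\<le>m. u < w \<and> w \<le> v \<and> w - u \<le> (L + 1) div 2 \<and> v - w \<le> L div 2)"
    using assms(1) by (simp del: dist_le_formula.simps)
  also have "\<dots> \<longleftrightarrow> v - u \<le> L" using ex_between_near_both_ends_iff assms(8,9) .
  finally show ?thesis .
qed

lemma prefix_eval_dist_le_formula:
  assumes "L \<le> dist_capacity q" "length xs = d" "trm_vars s \<subseteq> {..<d}" "trm_vars t \<subseteq> {..<d}"
    and "trm_eval m xs s \<le> trm_eval m xs t" "trm_eval m xs t \<le> m"
    and "odd q \<or> trm_eval m xs s < trm_eval m xs t"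
  shows "prefix_eval m (alternating_prefix q) (dist_le_formula q L d s t) xs \<longleftrightarrow>
    trm_eval m xs t - trm_eval m xs s \<le> L"
  using assms
proof (induction q arbitrary: L d xs s t)
  case 0
  then show ?case by simp
next
  case (Suc q)
  define u where "u = trm_eval m xs s"
  define v where "v = trm_eval m xs t"
  have len: "length (xs @ [z]) = Suc d" for z using Suc.prems(2) by simp
  have vars: "trm_vars (Var d) \<subseteq> {..<Suc d}" "trm_vars s \<subseteq> {..<Suc d}" "trm_vars t \<subseteq> {..<Suc d}"
    using Suc.prems(3,4) by auto
  have uv: "u \<le> v" "v \<le> m" "even q \<or> u < v"
    using Suc.prems(5-7) by (auto simp: u_def v_def)
  have ev: "trm_eval m (xs @ [z]) s = u" "trm_eval m (xs @ [z]) t = v" "trm_eval m (xs @ [z]) (Var d) = z"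
    for z using trm_eval_snoc Suc.prems(2-4) by (simp_all add: u_def v_def)
  have near_s: "prefix_eval m (alternating_prefix q) (dist_le_formula q L' (Suc d) s (Var d)) (xs @ [z])
      \<longleftrightarrow> z - u \<le> L'" if "L' \<le> dist_capacity q" "u < z" "z \<le> m" for L' z
    using Suc.IH[OF that(1) len vars(2,1)] that by (simp add: ev nth_append Suc.prems(2))
  have near_t: "prefix_eval m (alternating_prefix q) (dist_le_formula q L' (Suc d) (Var d) t) (xs @ [z])
      \<longleftrightarrow> v - z \<le> L'" if "L' \<le> dist_capacity q" "z \<le> v" "even q \<longrightarrow> z < v" for L' z
    using Suc.IH[OF that(1) len vars(1,3)] that uv by (simp add: ev nth_append Suc.prems(2))
  consider "L = 0" | "L \<noteq> 0" "even q" | "L \<noteq> 0" "odd q" by blast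
  then have "prefix_eval m (alternating_prefix (Suc q)) (dist_le_formula (Suc q) L d s t) xs \<longleftrightarrow>
      v - u \<le> L"
  proof cases
    case 1
    have "qf_vars (Eq s t) \<subseteq> {..<length xs}" using Suc.prems(2-4) by auto
    then have "determined m xs (Eq s t) (u = v)" using determined_by_vars u_def v_def by fastforce
    then show ?thesis using 1 uv prefix_eval_determined by auto
  next
    case 2
    then have "L div 2 \<le> dist_capacity q" "(L - 1) div 2 \<le> dist_capacity q"
      using Suc.prems(1) by auto
    with 2 show ?thesis using uv
      by (intro prefix_eval_dist_le_formula_Suc_even[OF 2(2,1) Suc.prems(2-4) u_def[symmetric]
            v_def[symmetric] uv(1,2)] near_s near_t) auto
  next
    case 3
    then have "(L + 1) div 2 \<le> dist_capacity q" "L div 2 \<le> dist_capacity q"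
      using Suc.prems(1) by auto
    with 3 show ?thesis using uv
      by (intro prefix_eval_dist_le_formula_Suc_odd[OF 3(2,1) Suc.prems(2-4) u_def[symmetric]
            v_def[symmetric]] near_s near_t) auto
  qed
  then show ?case by (simp only: u_def v_def)
qed

lemma qA_qE_base: "qA 1 = 1" "qE 1 = 2" "qA 2 = 2" "qE 2 = 2"
  by (subst qA.simps qE.simps; simp)+

lemma qA_qE_rec:
  "3 \<le> l \<Longrightarrow> qA l = qE (l div 2) + 1"
  "2 \<le> l \<Longrightarrow> qE l = (if even l then qA (l div 2) else qA (l div 2 + 1)) + 1"
  by (subst qA.simps qE.simps; simp)+

text \<open>The strict bound for odd \<open>qE l\<close> is needed in the step for odd \<open>l\<close>.\<close>

lemma le_dist_capacity_qA_qE: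
  assumes "1 \<le> l"
  shows "l \<le> dist_capacity (qA l) \<and> l \<le> dist_capacity (qE l) \<and>
    (odd (qE l) \<longrightarrow> l < dist_capacity (qE l))"
  using assms
proof (induction l rule: less_induct)
  case (less l)
  have cap_Suc: "2 * dist_capacity n \<le> dist_capacity (Suc n)"
    "even n \<Longrightarrow> dist_capacity (Suc n) = 2 * dist_capacity n + 1" for n
    by simp_all
  consider "l = 1" | "l = 2" | "3 \<le> l" using less.prems by linarith
  then show ?case
  proof cases
    case 1
    then show ?thesis by (simp add: qA_qE_base numeral_2_eq_2)
  next
    case 2
    then show ?thesis by (simp add: qA_qE_base numeral_2_eq_2)
  next
    case 3
    define k where "k = l div 2"
    have k: "1 \<le> k" "k < l" "k + 1 < l" using 3 by (auto simp: k_def)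
    have qA: "qA l = Suc (qE k)" using qA_qE_rec(1)[OF 3] by (simp add: k_def)
    show ?thesis
    proof (cases "even l")
      case True
      have "qE l = Suc (qA k)" using qA_qE_rec(2)[of l] 3 True by (simp add: k_def)
      moreover have "l = 2 * k" using True by (simp add: k_def)
      ultimately show ?thesis using less.IH[OF k(2,1)] qA cap_Suc[of "qE k"] cap_Suc[of "qA k"] by auto
    next
      case False
      have "qE l = Suc (qA (k + 1))" using qA_qE_rec(2)[of l] 3 False by (simp add: k_def)
      moreover have "l = 2 * k + 1" using False by (simp add: k_def)
      ultimately show ?thesis
        using less.IH[OF k(2,1)] less.IH[of "k + 1"] k qA cap_Suc[of "qE k"] cap_Suc[of "qA (k + 1)"]
        by (cases "even (qE k)") auto
    qed
  qed
qed

lemma nth_alternating_prefix: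
  "i < q \<Longrightarrow> alternating_prefix q ! i = (if even (q - Suc i) then All else Ex)"
  by (induction q arbitrary: i) (auto simp: nth_Cons split: nat.split)

lemma length_alternating_prefix [simp]: "length (alternating_prefix q) = q"
  by (induction q) auto

lemma alternating_ending_All_alternating_prefix:
  "q \<noteq> 0 \<Longrightarrow> alternating_ending_All (alternating_prefix q)"
  unfolding alternating_ending_All_def
  by (auto simp: last_conv_nth nth_alternating_prefix length_0_conv[symmetric])

theorem mainTheorem4:
  fixes l :: nat
  assumes "l \<ge> 1"
  shows "\<exists>\<sigma> :: prenex. is_sentence \<sigma> \<and> length (fst \<sigma>) = qstar l \<and>
           separates_L l \<sigma> \<and> alternating_ending_All (fst \<sigma>)"
proof -
  define q where "q = qstar l"
  define \<sigma> where "\<sigma> = (alternating_prefix q, dist_le_formula q l 0 Min Max)"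
  have cap: "l \<le> dist_capacity q"
    using le_dist_capacity_qA_qE[OF assms] by (auto simp: q_def qstar_def min_def)
  with assms have "q \<noteq> 0" by (cases q) auto
  have "holds_in_L m \<sigma> \<longleftrightarrow> m \<le> l" if "1 \<le> m" for m
    using prefix_eval_dist_le_formula[OF cap, of "[]" 0 Min Max m] that
    by (simp add: holds_in_L_def \<sigma>_def)
  then have "separates_L l \<sigma>" using assms by (auto simp: separates_L_def)
  moreover have "is_sentence \<sigma>"
    using qf_vars_dist_le_formula[of q l 0 Min Max] by (auto simp: is_sentence_def \<sigma>_def)
  moreover have "alternating_ending_All (fst \<sigma>)"
    using \<open>q \<noteq> 0\<close> alternating_ending_All_alternating_prefix by (simp add: \<sigma>_def)
  moreover have "length (fst \<sigma>) = qstar l" by (simp add: \<sigma>_def q_def)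
  ultimately show ?thesis by blast
qed

end
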